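(* There exists an absolute constant $C>0$ such that every finite simple graph $G$ with $n$ vertices and at least one edge satisfies \[ \Gamma(G) \leq C\,\lambda_1(G)\left(\frac{n}{\lambda_1(G)}\right)^{1/3}, \] where $\lambda_1(G)$ is the largest eigenvalue of the adjacency matrix of $G$ and $\Gamma(G)$ is the Grundy number of $G$.
   Context: Given an ordering $(x_1,\dots,x_n)$ of $V(G)$, the first-fit coloring algorithm colors $x_i$ with the smallest positive integer not used on the neighbors of $x_i$ among $x_1,\dots,x_{i-1}$. The Grundy number $\Gamma(G)$ is the largest number of colors used by the first-fit algorithm over all vertex orderings. *)

theory Defs
  imports "Jordan_Normal_Form.Char_Poly"
begin

definition simple_graph :: "nat \<Rightarrow> (nat \<Rightarrow> nat \<Rightarrow> bool) \<Rightarrow> bool" where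
  "simple_graph n E \<longleftrightarrow> (\<forall>i j. E i j \<longrightarrow> i < n \<and> j < n) \<and> (\<forall>i j. E i j \<longrightarrow> E j i) \<and> (\<forall>i. \<not> E i i)"

text \<open>First-fit step: colour x with the least positive integer not used on already
  coloured neighbours (colour 0 means "not yet coloured").\<close>
definition ff_step :: "(nat \<Rightarrow> nat \<Rightarrow> bool) \<Rightarrow> (nat \<Rightarrow> nat) \<Rightarrow> nat \<Rightarrow> (nat \<Rightarrow> nat)" where
  "ff_step E cf x = cf(x := (LEAST c. 0 < c \<and> (\<forall>y. E x y \<and> cf y \<noteq> 0 \<longrightarrow> cf y \<noteq> c)))"

definition first_fit :: "(nat \<Rightarrow> nat \<Rightarrow> bool) \<Rightarrow> nat list \<Rightarrow> (nat \<Rightarrow> nat)" where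
  "first_fit E xs = foldl (ff_step E) (\<lambda>_. 0) xs"

definition ff_num_colors :: "(nat \<Rightarrow> nat \<Rightarrow> bool) \<Rightarrow> nat list \<Rightarrow> nat" where
  "ff_num_colors E xs = card (first_fit E xs ` set xs)"

definition grundy_number :: "nat \<Rightarrow> (nat \<Rightarrow> nat \<Rightarrow> bool) \<Rightarrow> nat" where
  "grundy_number n E = Max {ff_num_colors E xs | xs. distinct xs \<and> set xs = {0..<n}}"

definition adjacency_matrix :: "nat \<Rightarrow> (nat \<Rightarrow> nat \<Rightarrow> bool) \<Rightarrow> real mat" where
  "adjacency_matrix n E = mat n n (\<lambda>(i, j). if E i j then 1 else 0)"

definition lambda1 :: "nat \<Rightarrow> (nat \<Rightarrow> nat \<Rightarrow> bool) \<Rightarrow> real" where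
  "lambda1 n E = Max {k. eigenvalue (adjacency_matrix n E) k}"

end

theory Submission
  imports Defs "HOL-Analysis.Analysis"
begin

(* Let first-fit colour G with k colours. Every vertex of colour c has neighbours of all colours
   below c, so the colours used are exactly 1, ..., k. Put m = k div 2, let L be the vertices of
   colour at most m and T those of larger colour; then |T| >= k - m >= m and every vertex of T has
   at least m neighbours in L. The test vector equal to sqrt(n/|T|) on T and to 1 on L has squared
   norm at most 2n and quadratic form at least m sqrt(n |T|), so the Rayleigh principle gives
   |T| m^2 <= 4 n lambda1^2. Since k <= 3m this yields k^3 <= 108 n lambda1^2, which is the claim
   with C = 5. The Rayleigh principle itself comes from maximising the quadratic form of the
   adjacency matrix on the unit sphere: the maximiser is an eigenvector. *)

definition quad_form :: "(nat \<Rightarrow> nat \<Rightarrow> real) \<Rightarrow> nat \<Rightarrow> (nat \<Rightarrow> real) \<Rightarrow> real" where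
  "quad_form a n f = (\<Sum>i\<in>{0..<n}. \<Sum>j\<in>{0..<n}. a i j * f i * f j)"

definition sq_norm :: "nat \<Rightarrow> (nat \<Rightarrow> real) \<Rightarrow> real" where
  "sq_norm n f = (\<Sum>i\<in>{0..<n}. (f i)\<^sup>2)"

lemma quad_form_cong:
  "(\<And>i j. i < n \<Longrightarrow> j < n \<Longrightarrow> a i j = b i j) \<Longrightarrow> (\<And>i. i < n \<Longrightarrow> f i = g i) \<Longrightarrow>
    quad_form a n f = quad_form b n g"
  unfolding quad_form_def by (intro sum.cong) auto

lemma sq_norm_cong: "(\<And>i. i < n \<Longrightarrow> f i = g i) \<Longrightarrow> sq_norm n f = sq_norm n g"
  unfolding sq_norm_def by (intro sum.cong) auto

lemma quad_form_scale: "quad_form a n (\<lambda>i. c * f i) = c\<^sup>2 * quad_form a n f"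
  unfolding quad_form_def power2_eq_square by (simp add: sum_distrib_left algebra_simps)

lemma sq_norm_scale: "sq_norm n (\<lambda>i. c * f i) = c\<^sup>2 * sq_norm n f"
  unfolding sq_norm_def by (simp add: sum_distrib_left power_mult_distrib)

lemma sq_norm_nonneg: "0 \<le> sq_norm n f"
  unfolding sq_norm_def by (intro sum_nonneg) auto

lemma sq_norm_eq_0_iff: "sq_norm n f = 0 \<longleftrightarrow> (\<forall>i<n. f i = 0)"
  unfolding sq_norm_def by (subst sum_nonneg_eq_0_iff) auto

lemma square_le_sq_norm: "i < n \<Longrightarrow> (f i)\<^sup>2 \<le> sq_norm n f"
  unfolding sq_norm_def by (rule member_le_sum) auto

lemma quad_form_perturb:
  assumes "\<And>i j. i < n \<Longrightarrow> j < n \<Longrightarrow> a i j = a j i"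
  shows "quad_form a n (\<lambda>i. y i + t * u i) =
    quad_form a n y + 2 * t * (\<Sum>i\<in>{0..<n}. u i * (\<Sum>j\<in>{0..<n}. a i j * y j)) + t\<^sup>2 * quad_form a n u"
proof -
  have swap: "(\<Sum>i\<in>{0..<n}. \<Sum>j\<in>{0..<n}. a i j * y i * u j) = (\<Sum>i\<in>{0..<n}. \<Sum>j\<in>{0..<n}. a i j * u i * y j)"
    by (subst sum.swap) (auto intro!: sum.cong simp: assms mult_ac)
  have "quad_form a n (\<lambda>i. y i + t * u i) = quad_form a n y
      + t * (\<Sum>i\<in>{0..<n}. \<Sum>j\<in>{0..<n}. a i j * u i * y j)
      + t * (\<Sum>i\<in>{0..<n}. \<Sum>j\<in>{0..<n}. a i j * y i * u j) + t\<^sup>2 * quad_form a n u"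
    unfolding quad_form_def
    by (simp add: sum.distrib sum_distrib_left algebra_simps power2_eq_square)
  also note swap
  finally show ?thesis
    by (simp add: sum_distrib_left mult_ac)
qed

lemma sq_norm_perturb:
  "sq_norm n (\<lambda>i. y i + t * u i) = sq_norm n y + 2 * t * (\<Sum>i\<in>{0..<n}. u i * y i) + t\<^sup>2 * sq_norm n u"
  unfolding sq_norm_def by (simp add: sum.distrib sum_distrib_left power2_eq_square algebra_simps)

lemma quad_form_attains_max_on_sphere:
  assumes "0 < n"
  obtains y where "\<forall>i\<ge>n. y i = 0" "sq_norm n y = 1"
    "\<And>f. \<forall>i\<ge>n. f i = 0 \<Longrightarrow> sq_norm n f = 1 \<Longrightarrow> quad_form a n f \<le> quad_form a n y"
proof -
  define S where "S = {f. (\<forall>i\<ge>n. f i = 0) \<and> sq_norm n f = 1}"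
  define B :: "(nat \<Rightarrow> real) set" where "B = PiE UNIV (\<lambda>i. if i < n then {-1..1} else {0})"
  have "compactin (product_topology (\<lambda>_. euclidean) UNIV) B"
    unfolding B_def by (subst compactin_PiE) auto
  hence "compact B"
    by (simp add: euclidean_product_topology compactin_euclidean_iff)
  moreover have "closed S"
    unfolding S_def sq_norm_def
    by (intro closed_Collect_conj closed_Collect_all closed_Collect_imp closed_Collect_eq
        continuous_intros) auto
  moreover have "S \<subseteq> B"
  proof
    fix f assume f: "f \<in> S"
    have "\<bar>f i\<bar> \<le> 1" if "i < n" for i
      using square_le_sq_norm[OF that, of f] f by (simp add: S_def abs_square_le_1)
    with f show "f \<in> B"
      by (auto simp: S_def B_def PiE_iff abs_le_iff)
  qed
  ultimately have "compact S"
    using compact_Int_closed[of B S] by (simp add: Int_absorb1)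
  moreover have "(\<lambda>i. if i = 0 then 1 else 0) \<in> S"
    using assms by (simp add: S_def sq_norm_def if_distrib[of "\<lambda>x. x\<^sup>2"] cong: if_cong)
  moreover have "continuous_on S (quad_form a n)"
    unfolding quad_form_def
    by (intro continuous_intros continuous_on_subset[OF continuous_on_product_coordinates]) auto
  ultimately obtain y where "y \<in> S" "\<forall>f\<in>S. quad_form a n f \<le> quad_form a n y"
    using continuous_attains_sup by blast
  with that show ?thesis
    unfolding S_def by blast
qed

lemma quad_form_le_mult_sq_norm:
  assumes sphere: "\<And>f. \<forall>i\<ge>n. f i = 0 \<Longrightarrow> sq_norm n f = 1 \<Longrightarrow> quad_form a n f \<le> \<mu>"
  shows "quad_form a n f \<le> \<mu> * sq_norm n f"
proof (cases "sq_norm n f = 0")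
  case True
  then have "quad_form a n f = quad_form a n (\<lambda>_. 0)"
    by (intro quad_form_cong) (auto simp: sq_norm_eq_0_iff)
  with True show ?thesis
    by (simp add: quad_form_def)
next
  case False
  define s where "s = sqrt (sq_norm n f)"
  have s: "0 < s" "s\<^sup>2 = sq_norm n f"
    using False sq_norm_nonneg[of n f] by (auto simp: s_def)
  define g where "g i = (if i < n then (1 / s) * f i else 0)" for i
  have "sq_norm n g = (1 / s)\<^sup>2 * sq_norm n f"
    unfolding sq_norm_scale[symmetric] by (rule sq_norm_cong) (simp add: g_def)
  moreover have "quad_form a n g = (1 / s)\<^sup>2 * quad_form a n f"
    unfolding quad_form_scale[symmetric] by (rule quad_form_cong) (simp_all add: g_def)
  ultimately have "sq_norm n g = 1" "quad_form a n g = quad_form a n f / sq_norm n f"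
    using s False by (simp_all add: power_divide)
  then have "quad_form a n f / sq_norm n f \<le> \<mu>"
    using sphere[of g] by (simp add: g_def)
  moreover have "0 < sq_norm n f"
    using False sq_norm_nonneg[of n f] by linarith
  ultimately show ?thesis
    by (simp add: divide_le_eq mult.commute)
qed

lemma coeff_eq_0_if_quadratic_le_0:
  fixes c d :: real
  assumes "\<And>t. 2 * t * c + t\<^sup>2 * d \<le> 0"
  shows "c = 0"
proof -
  define e where "e = \<bar>d\<bar> + 1"
  define t where "t = c / e"
  have e: "0 < e" "\<bar>d\<bar> \<le> e"
    by (auto simp: e_def)
  have "t\<^sup>2 * \<bar>d\<bar> \<le> t * c"
    using mult_left_mono[OF e(2), of "c\<^sup>2"] e(1)
    by (simp add: t_def field_simps power2_eq_square)
  moreover have "- (t\<^sup>2 * \<bar>d\<bar>) \<le> t\<^sup>2 * d"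
    using mult_left_mono[of "- \<bar>d\<bar>" d "t\<^sup>2"] by simp
  ultimately have "t * c \<le> 0"
    using assms[of t] by linarith
  then have "c\<^sup>2 / e \<le> 0"
    by (simp add: t_def power2_eq_square)
  with e(1) show "c = 0"
    by (simp add: divide_le_0_iff)
qed

lemma symmetric_quad_form_max_eigenpair:
  assumes sym: "\<And>i j. i < n \<Longrightarrow> j < n \<Longrightarrow> a i j = a j i" and "0 < n"
  obtains y \<mu> where "sq_norm n y = 1" "\<And>i. i < n \<Longrightarrow> (\<Sum>j\<in>{0..<n}. a i j * y j) = \<mu> * y i"
    "\<And>f. quad_form a n f \<le> \<mu> * sq_norm n f"
proof -
  obtain y where y: "\<forall>i\<ge>n. y i = 0" "sq_norm n y = 1"
    "\<And>f. \<forall>i\<ge>n. f i = 0 \<Longrightarrow> sq_norm n f = 1 \<Longrightarrow> quad_form a n f \<le> quad_form a n y"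
    using quad_form_attains_max_on_sphere[OF \<open>0 < n\<close>] by blast
  define \<mu> where "\<mu> = quad_form a n y"
  have rayleigh: "quad_form a n f \<le> \<mu> * sq_norm n f" for f
    unfolding \<mu>_def by (rule quad_form_le_mult_sq_norm) (use y in blast)
  \<comment> \<open>Perturbing the maximiser y along its residual u, the term linear in t is 2 |u|^2,
    so u must vanish.\<close>
  define u where "u i = (\<Sum>j\<in>{0..<n}. a i j * y j) - \<mu> * y i" for i
  have "(\<Sum>i\<in>{0..<n}. u i * (\<Sum>j\<in>{0..<n}. a i j * y j)) - \<mu> * (\<Sum>i\<in>{0..<n}. u i * y i)
      = (\<Sum>i\<in>{0..<n}. u i * ((\<Sum>j\<in>{0..<n}. a i j * y j) - \<mu> * y i))"
    by (simp add: sum_subtractf sum_distrib_left right_diff_distrib mult.left_commute)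
  also have "\<dots> = sq_norm n u"
    by (simp add: sq_norm_def u_def power2_eq_square)
  finally have residual: "(\<Sum>i\<in>{0..<n}. u i * (\<Sum>j\<in>{0..<n}. a i j * y j))
      = sq_norm n u + \<mu> * (\<Sum>i\<in>{0..<n}. u i * y i)"
    by simp
  have "2 * t * sq_norm n u + t\<^sup>2 * (quad_form a n u - \<mu> * sq_norm n u) \<le> 0" for t
  proof -
    let ?S = "\<Sum>i\<in>{0..<n}. u i * y i"
    have "quad_form a n (\<lambda>i. y i + t * u i) = \<mu> + 2 * t * (sq_norm n u + \<mu> * ?S) + t\<^sup>2 * quad_form a n u"
      using quad_form_perturb[OF sym, where y=y and t=t and u=u] by (simp add: residual \<mu>_def)
    moreover have "sq_norm n (\<lambda>i. y i + t * u i) = 1 + 2 * t * ?S + t\<^sup>2 * sq_norm n u"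
      using sq_norm_perturb[where y=y and t=t and u=u] by (simp add: y(2))
    ultimately show ?thesis
      using rayleigh[of "\<lambda>i. y i + t * u i"] by (simp add: algebra_simps)
  qed
  then have "sq_norm n u = 0"
    by (rule coeff_eq_0_if_quadratic_le_0)
  then have "(\<Sum>j\<in>{0..<n}. a i j * y j) = \<mu> * y i" if "i < n" for i
    using that by (simp add: sq_norm_eq_0_iff u_def)
  with y(2) rayleigh that show ?thesis
    by blast
qed

lemma finite_eigenvalues:
  assumes "(A :: 'a :: field mat) \<in> carrier_mat n n"
  shows "finite {k. eigenvalue A k}"
proof -
  have "{k. eigenvalue A k} = {k. poly (char_poly A) k = 0}"
    using eigenvalue_root_char_poly[OF assms] by auto
  moreover have "char_poly A \<noteq> 0"
    using degree_monic_char_poly[OF assms] by auto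
  ultimately show ?thesis
    using poly_roots_finite by simp
qed

lemma quad_form_le_max_eigenvalue:
  fixes A :: "real mat"
  assumes A: "A \<in> carrier_mat n n" and sym: "A\<^sup>T = A"
  shows "quad_form (\<lambda>i j. A $$ (i, j)) n f \<le> Max {k. eigenvalue A k} * sq_norm n f"
proof (cases "n = 0")
  case True
  then show ?thesis
    by (simp add: quad_form_def sq_norm_def)
next
  case False
  have symA: "A $$ (i, j) = A $$ (j, i)" if "i < n" "j < n" for i j
    using A that by (metis carrier_matD index_transpose_mat(1) sym)
  obtain y \<mu> where y: "sq_norm n y = 1" "\<And>i. i < n \<Longrightarrow> (\<Sum>j\<in>{0..<n}. A $$ (i, j) * y j) = \<mu> * y i"
    and rayleigh: "\<And>f. quad_form (\<lambda>i j. A $$ (i, j)) n f \<le> \<mu> * sq_norm n f"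
    using symmetric_quad_form_max_eigenpair[of n "\<lambda>i j. A $$ (i, j)", OF symA] False by blast
  have "Matrix.vec n y \<noteq> 0\<^sub>v n"
  proof
    assume "Matrix.vec n y = 0\<^sub>v n"
    then have "\<forall>i<n. y i = 0"
      by (metis index_vec index_zero_vec(1))
    with y(1) show False
      by (simp flip: sq_norm_eq_0_iff)
  qed
  moreover have "A *\<^sub>v Matrix.vec n y = \<mu> \<cdot>\<^sub>v Matrix.vec n y"
  proof (rule eq_vecI)
    fix i
    assume "i < dim_vec (\<mu> \<cdot>\<^sub>v Matrix.vec n y)"
    with A y(2)[of i] show "(A *\<^sub>v Matrix.vec n y) $ i = (\<mu> \<cdot>\<^sub>v Matrix.vec n y) $ i"
      by (simp add: mult_mat_vec_def scalar_prod_def)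
  qed (use A in simp)
  ultimately have "eigenvalue A \<mu>"
    using A unfolding eigenvalue_def eigenvector_def by (metis carrier_matD(1) vec_carrier)
  then have "\<mu> \<le> Max {k. eigenvalue A k}"
    using finite_eigenvalues[OF A] by (intro Max_ge) auto
  with rayleigh show ?thesis
    by (meson mult_right_mono order_trans sq_norm_nonneg)
qed

lemma quad_form_adjacency_le_lambda1:
  assumes "symp E"
  shows "quad_form (\<lambda>i j. of_bool (E i j)) n f \<le> lambda1 n E * sq_norm n f"
proof -
  have "(adjacency_matrix n E)\<^sup>T = adjacency_matrix n E"
    using assms by (auto simp: adjacency_matrix_def symp_def)
  then have "quad_form (\<lambda>i j. adjacency_matrix n E $$ (i, j)) n f \<le> lambda1 n E * sq_norm n f"
    unfolding lambda1_def by (intro quad_form_le_max_eigenvalue) (simp add: adjacency_matrix_def)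
  moreover have "quad_form (\<lambda>i j. adjacency_matrix n E $$ (i, j)) n f =
      quad_form (\<lambda>i j. of_bool (E i j)) n f"
    by (intro quad_form_cong) (auto simp: adjacency_matrix_def)
  ultimately show ?thesis
    by simp
qed

lemma first_fit_snoc: "first_fit E (xs @ [x]) = ff_step E (first_fit E xs) x"
  unfolding first_fit_def by simp

lemma finite_range_first_fit: "finite (range (first_fit E xs))"
proof (induction xs rule: rev_induct)
  case Nil
  then show ?case
    by (simp add: first_fit_def)
next
  case (snoc x xs)
  have "range (first_fit E (xs @ [x])) \<subseteq> insert (ff_step E (first_fit E xs) x x) (range (first_fit E xs))"
    by (auto simp: first_fit_snoc ff_step_def)
  with snoc show ?case
    by (meson finite_insert finite_subset)
qed

(* Finiteness guarantees a free colour, so LEAST in ff_step is not taken of an empty predicate. *)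
lemma ff_step_colour:
  assumes "finite (range cf)"
  shows ff_step_colour_pos: "0 < ff_step E cf x x"
    and ff_step_colour_fresh: "E x y \<Longrightarrow> cf y \<noteq> 0 \<Longrightarrow> cf y \<noteq> ff_step E cf x x"
    and ff_step_colour_least: "0 < d \<Longrightarrow> d < ff_step E cf x x \<Longrightarrow> \<exists>y. E x y \<and> cf y = d"
proof -
  define P where "P c \<longleftrightarrow> 0 < c \<and> (\<forall>y. E x y \<and> cf y \<noteq> 0 \<longrightarrow> cf y \<noteq> c)" for c
  have c: "ff_step E cf x x = (LEAST c. P c)"
    by (simp add: ff_step_def P_def)
  have "P (Suc (Max (range cf)))"
    unfolding P_def using Max_ge[OF assms] by (metis not_less_eq_eq order_refl rangeI zero_less_Suc)
  then have "P (ff_step E cf x x)"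
    unfolding c by (rule LeastI)
  then show "0 < ff_step E cf x x" "E x y \<Longrightarrow> cf y \<noteq> 0 \<Longrightarrow> cf y \<noteq> ff_step E cf x x"
    by (auto simp: P_def)
  show "\<exists>y. E x y \<and> cf y = d" if "0 < d" "d < ff_step E cf x x"
  proof -
    have "\<not> P d"
      using that(2) unfolding c by (rule not_less_Least)
    with that(1) show ?thesis
      unfolding P_def by auto
  qed
qed

lemma first_fit_nonzero_iff: "first_fit E xs v \<noteq> 0 \<longleftrightarrow> v \<in> set xs"
proof (induction xs rule: rev_induct)
  case Nil
  then show ?case
    by (simp add: first_fit_def)
next
  case (snoc x xs)
  then show ?case
    using ff_step_colour_pos[OF finite_range_first_fit]
    unfolding first_fit_snoc by (auto simp: ff_step_def)
qed

lemma first_fit_proper: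
  assumes "symp E" "irreflp E"
  shows "E v w \<Longrightarrow> v \<in> set xs \<Longrightarrow> w \<in> set xs \<Longrightarrow> first_fit E xs v \<noteq> first_fit E xs w"
proof (induction xs arbitrary: v w rule: rev_induct)
  case Nil
  then show ?case
    by simp
next
  case (snoc x xs)
  define cf where "cf = first_fit E xs"
  have new: "first_fit E (xs @ [x]) = cf(x := ff_step E cf x x)"
    by (simp add: first_fit_snoc ff_step_def cf_def)
  have fresh: "cf y \<noteq> ff_step E cf x x" if "E x y" "y \<in> set xs" for y
    using ff_step_colour_fresh[OF finite_range_first_fit] that first_fit_nonzero_iff
    by (auto simp: cf_def)
  have "v \<noteq> w"
    using snoc.prems(1) \<open>irreflp E\<close> by (auto simp: irreflp_def)
  then consider "v = x" "w \<noteq> x" "w \<in> set xs" | "w = x" "v \<noteq> x" "v \<in> set xs"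
    | "v \<noteq> x" "w \<noteq> x" "v \<in> set xs" "w \<in> set xs"
    using snoc.prems(2,3) by auto
  then show ?case
  proof cases
    case 1
    with fresh[of w] snoc.prems(1) show ?thesis
      unfolding new by auto
  next
    case 2
    with fresh[of v] snoc.prems(1) \<open>symp E\<close> show ?thesis
      unfolding new by (auto simp: symp_def)
  next
    case 3
    with snoc.IH[folded cf_def] snoc.prems(1) show ?thesis
      unfolding new by auto
  qed
qed

lemma first_fit_has_smaller_colours:
  assumes "distinct xs" "v \<in> set xs" "0 < d" "d < first_fit E xs v"
  shows "\<exists>w. E v w \<and> first_fit E xs w = d"
  using assms
proof (induction xs arbitrary: v rule: rev_induct)
  case Nil
  then show ?case
    by simp
next
  case (snoc x xs)
  define cf where "cf = first_fit E xs"
  have new: "first_fit E (xs @ [x]) = cf(x := ff_step E cf x x)"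
    by (simp add: first_fit_snoc ff_step_def cf_def)
  have "cf x = 0"
    using snoc.prems(1) first_fit_nonzero_iff by (auto simp: cf_def)
  show ?case
  proof (cases "v = x")
    case True
    with snoc.prems(4) have "d < ff_step E cf x x"
      unfolding new by simp
    then obtain y where "E x y" "cf y = d"
      using ff_step_colour_least[OF finite_range_first_fit] snoc.prems(3) unfolding cf_def by blast
    moreover have "y \<noteq> x"
      using \<open>cf x = 0\<close> \<open>cf y = d\<close> snoc.prems(3) by auto
    ultimately show ?thesis
      using True unfolding new by auto
  next
    case False
    with snoc.prems(2,4) have "v \<in> set xs" "d < cf v"
      unfolding new by auto
    then obtain w where "E v w" "cf w = d"
      using snoc.IH[of v] snoc.prems(1,3) unfolding cf_def by auto
    moreover have "w \<noteq> x"
      using \<open>cf x = 0\<close> \<open>cf w = d\<close> snoc.prems(3) by auto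
    ultimately show ?thesis
      unfolding new by auto
  qed
qed

definition grundy_colouring :: "nat \<Rightarrow> (nat \<Rightarrow> nat \<Rightarrow> bool) \<Rightarrow> (nat \<Rightarrow> nat) \<Rightarrow> bool" where
  "grundy_colouring n E colour \<longleftrightarrow>
     (\<forall>v<n. 0 < colour v) \<and> (\<forall>v w. E v w \<longrightarrow> colour v \<noteq> colour w) \<and>
     (\<forall>v<n. \<forall>d. 0 < d \<and> d < colour v \<longrightarrow> (\<exists>w. E v w \<and> colour w = d))"

lemma simple_graph_symp: "simple_graph n E \<Longrightarrow> symp E"
  by (auto simp: simple_graph_def symp_def)

lemma first_fit_grundy_colouring:
  assumes G: "simple_graph n E" and xs: "distinct xs" "set xs = {0..<n}"
  shows "grundy_colouring n E (first_fit E xs)"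
proof -
  have "irreflp E"
    using G by (auto simp: simple_graph_def irreflp_def)
  with G xs show ?thesis
    unfolding grundy_colouring_def
    using first_fit_nonzero_iff first_fit_proper[OF simple_graph_symp[OF G]]
      first_fit_has_smaller_colours
    by (fastforce simp: simple_graph_def)
qed

lemma grundy_colouring_colours:
  assumes colour: "grundy_colouring n E colour" and G: "simple_graph n E" and "E i j"
  obtains k where "colour ` {0..<n} = {1..k}" "2 \<le> k"
proof -
  have ij: "i < n" "j < n"
    using G \<open>E i j\<close> by (auto simp: simple_graph_def)
  define k where "k = Max (colour ` {0..<n})"
  have "k \<in> colour ` {0..<n}"
    unfolding k_def using ij by (intro Max_in) auto
  then obtain w where w: "w < n" "colour w = k"
    by auto
  have "colour ` {0..<n} \<subseteq> {1..k}"
    using colour by (auto simp: grundy_colouring_def k_def Suc_le_eq)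
  moreover have "c \<in> colour ` {0..<n}" if "1 \<le> c" "c \<le> k" for c
  proof (cases "c = k")
    case False
    with that w have "0 < c" "c < colour w"
      by auto
    with colour w(1) obtain u where "E w u" "colour u = c"
      unfolding grundy_colouring_def by blast
    with G show ?thesis
      by (auto simp: simple_graph_def)
  qed (use w in auto)
  ultimately have colours: "colour ` {0..<n} = {1..k}"
    by auto
  have "colour i \<noteq> colour j" "colour i \<in> {1..k}" "colour j \<in> {1..k}"
    using colour \<open>E i j\<close> ij colours by (auto simp: grundy_colouring_def)
  then have "2 \<le> k"
    by auto
  with colours that show ?thesis
    by blast
qed

lemma quad_form_adjacency_ge_neighbour_sum:
  assumes "\<And>v. 0 \<le> g v" "T \<subseteq> {0..<n}" "L \<subseteq> {0..<n}"
  shows "(\<Sum>t\<in>T. \<Sum>j\<in>{j\<in>L. E t j}. g t * g j) \<le> quad_form (\<lambda>i j. of_bool (E i j)) n g"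
proof -
  have "(\<Sum>t\<in>T. \<Sum>j\<in>{j\<in>L. E t j}. g t * g j) = (\<Sum>t\<in>T. \<Sum>j\<in>{j\<in>L. E t j}. of_bool (E t j) * g t * g j)"
    by (intro sum.cong) auto
  also have "\<dots> \<le> (\<Sum>t\<in>T. \<Sum>j\<in>{0..<n}. of_bool (E t j) * g t * g j)"
    using assms by (intro sum_mono sum_mono2) auto
  also have "\<dots> \<le> quad_form (\<lambda>i j. of_bool (E i j)) n g"
    unfolding quad_form_def using assms by (intro sum_mono2 sum_nonneg) auto
  finally show ?thesis .
qed

lemma quad_form_adjacency_ge_min_degree:
  assumes T: "T \<subseteq> {0..<n}" and L: "L \<subseteq> {0..<n}" "T \<inter> L = {}" and "0 \<le> x"
    and deg: "\<And>t. t \<in> T \<Longrightarrow> m \<le> card {j\<in>L. E t j}"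
  shows "real (card T) * x * real m \<le>
    quad_form (\<lambda>i j. of_bool (E i j)) n (\<lambda>v. if v \<in> T then x else if v \<in> L then 1 else 0)"
    (is "_ \<le> quad_form _ n ?g")
proof -
  have "real (card T) * x * real m = (\<Sum>t\<in>T. x * real m)"
    by simp
  also have "\<dots> \<le> (\<Sum>t\<in>T. \<Sum>j\<in>{j\<in>L. E t j}. ?g t * ?g j)"
  proof (intro sum_mono)
    fix t
    assume "t \<in> T"
    have "x * real m \<le> (\<Sum>j\<in>{j\<in>L. E t j}. x)"
      using deg[OF \<open>t \<in> T\<close>] \<open>0 \<le> x\<close> by (simp add: mult.commute mult_left_mono)
    also have "\<dots> = (\<Sum>j\<in>{j\<in>L. E t j}. ?g t * ?g j)"
      using \<open>t \<in> T\<close> L(2) by (intro sum.cong) auto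
    finally show "x * real m \<le> (\<Sum>j\<in>{j\<in>L. E t j}. ?g t * ?g j)" .
  qed
  also have "\<dots> \<le> quad_form (\<lambda>i j. of_bool (E i j)) n ?g"
    using \<open>0 \<le> x\<close> T L(1) by (intro quad_form_adjacency_ge_neighbour_sum) auto
  finally show ?thesis .
qed

lemma sq_norm_two_level_le:
  assumes "T \<subseteq> {0..<n}"
  shows "sq_norm n (\<lambda>v. if v \<in> T then x else if v \<in> L then 1 else 0) \<le> real (card T) * x\<^sup>2 + real n"
    (is "sq_norm n ?g \<le> _")
proof -
  have "sq_norm n ?g = (\<Sum>v\<in>T. x\<^sup>2) + (\<Sum>v\<in>{0..<n} - T. (?g v)\<^sup>2)"
    unfolding sq_norm_def sum.subset_diff[OF assms finite_atLeastLessThan] by simp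
  also have "(\<Sum>v\<in>{0..<n} - T. (?g v)\<^sup>2) \<le> (\<Sum>v\<in>{0..<n} - T. 1)"
    by (intro sum_mono) auto
  also have "\<dots> \<le> real n"
    using card_mono[of "{0..<n}" "{0..<n} - T"] by simp
  finally show ?thesis
    by simp
qed

lemma rayleigh_bound_from_min_degree:
  assumes rayleigh: "\<And>f. quad_form (\<lambda>i j. of_bool (E i j)) n f \<le> \<mu> * sq_norm n f"
    and T: "T \<subseteq> {0..<n}" "T \<noteq> {}" and L: "L \<subseteq> {0..<n}" "T \<inter> L = {}"
    and deg: "\<And>t. t \<in> T \<Longrightarrow> m \<le> card {j\<in>L. E t j}" and "0 < m"
  shows "0 < \<mu>" and "real (card T) * (real m)\<^sup>2 \<le> 4 * real n * \<mu>\<^sup>2"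
proof -
  have "0 < card T" "card T \<le> n"
    using T finite_subset[OF T(1)] card_mono[OF _ T(1)] by auto
  \<comment> \<open>Chosen so that T contributes n to the squared norm, no less than L can.\<close>
  define \<alpha> where "\<alpha> = sqrt (real n / real (card T))"
  have \<alpha>: "0 < \<alpha>" "real (card T) * \<alpha>\<^sup>2 = real n"
    using \<open>0 < card T\<close> \<open>card T \<le> n\<close> by (auto simp: \<alpha>_def)
  define g where "g v = (if v \<in> T then \<alpha> else if v \<in> L then 1 else 0)" for v
  have lower: "real (card T) * \<alpha> * real m \<le> \<mu> * sq_norm n g"
    using quad_form_adjacency_ge_min_degree[OF T(1) L less_imp_le[OF \<alpha>(1)] deg] rayleigh[of g]
    unfolding g_def by (rule order_trans)
  have norm: "sq_norm n g \<le> 2 * real n"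
    using sq_norm_two_level_le[OF T(1), of \<alpha> L] \<alpha>(2) unfolding g_def by simp
  have pos: "0 < real (card T) * \<alpha> * real m"
    using \<open>0 < card T\<close> \<alpha>(1) \<open>0 < m\<close> by simp
  with lower have "0 < \<mu> * sq_norm n g"
    by linarith
  then show "0 < \<mu>"
    using sq_norm_nonneg[of n g] by (auto simp: zero_less_mult_iff)
  note lower
  also have "\<mu> * sq_norm n g \<le> \<mu> * (2 * real n)"
    using norm \<open>0 < \<mu>\<close> by (intro mult_left_mono) auto
  finally have "real (card T) * \<alpha> * real m \<le> 2 * real n * \<mu>"
    by (simp add: mult_ac)
  then have "(real (card T) * \<alpha> * real m)\<^sup>2 \<le> (2 * real n * \<mu>)\<^sup>2"
    using pos by (intro power_mono) auto
  moreover have "(real (card T) * \<alpha> * real m)\<^sup>2 = real (card T) * (real (card T) * \<alpha>\<^sup>2) * (real m)\<^sup>2"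
    by (simp add: power_mult_distrib power2_eq_square mult_ac)
  moreover have "(2 * real n * \<mu>)\<^sup>2 = real n * (4 * real n * \<mu>\<^sup>2)"
    by (simp add: power_mult_distrib power2_eq_square mult_ac)
  ultimately have "real n * (real (card T) * (real m)\<^sup>2) \<le> real n * (4 * real n * \<mu>\<^sup>2)"
    unfolding \<alpha>(2) by (simp add: mult_ac)
  then show "real (card T) * (real m)\<^sup>2 \<le> 4 * real n * \<mu>\<^sup>2"
    using \<open>card T \<le> n\<close> \<open>0 < card T\<close> by simp
qed

lemma card_colour_above_ge:
  fixes colour :: "nat \<Rightarrow> nat"
  assumes "colour ` {0..<n} = {1..k}"
  shows "k - m \<le> card {v\<in>{0..<n}. m < colour v}"
proof -
  let ?H = "{v\<in>{0..<n}. m < colour v}"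
  have fin: "finite ?H"
    using finite_atLeastLessThan[of 0 n] by (rule finite_subset[rotated]) auto
  have "{m<..k} \<subseteq> colour ` ?H"
  proof
    fix c
    assume c: "c \<in> {m<..k}"
    then have "c \<in> colour ` {0..<n}"
      using assms by auto
    with c show "c \<in> colour ` ?H"
      by auto
  qed
  then have "card {m<..k} \<le> card (colour ` ?H)"
    using fin by (intro card_mono) simp_all
  also have "\<dots> \<le> card ?H"
    using fin by (rule card_image_le)
  finally show ?thesis
    by simp
qed

lemma grundy_colouring_low_neighbours:
  assumes colour: "grundy_colouring n E colour" and G: "simple_graph n E"
    and "t < n" "m < colour t"
  shows "m \<le> card {j. E t j \<and> colour j \<le> m}"
proof -
  have fin: "finite {j. E t j \<and> colour j \<le> m}"
    by (rule finite_subset[of _ "{0..<n}"]) (use G in \<open>auto simp: simple_graph_def\<close>)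
  have "{1..m} \<subseteq> colour ` {j. E t j \<and> colour j \<le> m}"
  proof
    fix d
    assume "d \<in> {1..m}"
    with \<open>m < colour t\<close> have "0 < d" "d < colour t"
      by auto
    with colour \<open>t < n\<close> obtain w where "E t w" "colour w = d"
      unfolding grundy_colouring_def by blast
    with \<open>d \<in> {1..m}\<close> show "d \<in> colour ` {j. E t j \<and> colour j \<le> m}"
      by auto
  qed
  then have "card {1..m} \<le> card (colour ` {j. E t j \<and> colour j \<le> m})"
    using fin by (intro card_mono) simp_all
  also have "\<dots> \<le> card {j. E t j \<and> colour j \<le> m}"
    using fin by (rule card_image_le)
  finally show ?thesis
    by simp
qed

lemma grundy_colouring_cube_bound:
  assumes colour: "grundy_colouring n E colour" and G: "simple_graph n E" and "E i j"
    and rayleigh: "\<And>f. quad_form (\<lambda>i j. of_bool (E i j)) n f \<le> \<mu> * sq_norm n f"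
  shows "0 < \<mu>" and "real (card (colour ` {0..<n})) ^ 3 \<le> 108 * real n * \<mu>\<^sup>2"
proof -
  obtain k where colours: "colour ` {0..<n} = {1..k}" and "2 \<le> k"
    using grundy_colouring_colours[OF colour G \<open>E i j\<close>] .
  define m where "m = k div 2"
  define T where "T = {v\<in>{0..<n}. m < colour v}"
  define L where "L = {v\<in>{0..<n}. colour v \<le> m}"
  have "k - m \<le> card T"
    unfolding T_def by (rule card_colour_above_ge[OF colours])
  moreover have "m \<le> k - m" "0 < m"
    using \<open>2 \<le> k\<close> by (auto simp: m_def)
  ultimately have "T \<noteq> {}" "m \<le> card T"
    by auto
  have deg: "m \<le> card {j\<in>L. E t j}" if "t \<in> T" for t
  proof -
    have "{j\<in>L. E t j} = {j. E t j \<and> colour j \<le> m}"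
      using G by (auto simp: L_def simple_graph_def)
    with that show ?thesis
      using grundy_colouring_low_neighbours[OF colour G] by (simp add: T_def)
  qed
  have "T \<subseteq> {0..<n}" "L \<subseteq> {0..<n}" "T \<inter> L = {}"
    by (auto simp: T_def L_def)
  note bounds = rayleigh_bound_from_min_degree[OF rayleigh \<open>T \<subseteq> {0..<n}\<close> \<open>T \<noteq> {}\<close> this(2,3) deg \<open>0 < m\<close>]
  then show "0 < \<mu>"
    by blast
  have "real m * (real m)\<^sup>2 \<le> real (card T) * (real m)\<^sup>2"
    using \<open>m \<le> card T\<close> by (intro mult_right_mono) auto
  then have "real m ^ 3 \<le> real (card T) * (real m)\<^sup>2"
    by (simp add: power2_eq_square power3_eq_cube mult.assoc)
  moreover have "k \<le> 3 * m"
    using \<open>2 \<le> k\<close> unfolding m_def by presburger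
  then have "real (card (colour ` {0..<n})) ^ 3 \<le> (3 * real m) ^ 3"
    using colours of_nat_mono[OF \<open>k \<le> 3 * m\<close>] by (intro power_mono) auto
  ultimately show "real (card (colour ` {0..<n})) ^ 3 \<le> 108 * real n * \<mu>\<^sup>2"
    using bounds(2) by (simp add: power_mult_distrib)
qed

lemma grundy_number_attained:
  obtains xs where "distinct xs" "set xs = {0..<n}" "grundy_number n E = ff_num_colors E xs"
proof -
  define X where "X = {xs. distinct xs \<and> set xs = {0..<n}}"
  have "X \<subseteq> {xs. set xs \<subseteq> {0..<n} \<and> length xs \<le> n}"
    unfolding X_def using distinct_card by fastforce
  then have "finite X"
    using finite_lists_length_le[of "{0..<n}" n] finite_subset by blast
  moreover have "[0..<n] \<in> X"
    by (simp add: X_def)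
  moreover have "grundy_number n E = Max (ff_num_colors E ` X)"
    unfolding grundy_number_def X_def by (simp add: image_Collect)
  ultimately have "grundy_number n E \<in> ff_num_colors E ` X"
    by (metis Max_in empty_iff finite_imageI image_is_empty)
  with that show ?thesis
    by (auto simp: X_def)
qed

lemma le_powr_third_if_cube_le:
  fixes x a b c :: real
  assumes "0 \<le> x" "0 < a" "0 < b" "0 \<le> c" "x ^ 3 \<le> c ^ 3 * a * b\<^sup>2"
  shows "x \<le> c * b * (a / b) powr (1/3)"
proof -
  have "((a / b) powr (1/3)) ^ 3 = a / b"
    using assms by (simp add: powr_power)
  then have "(c * b * (a / b) powr (1/3)) ^ 3 = c ^ 3 * a * b\<^sup>2"
    using assms by (simp add: power_mult_distrib power2_eq_square power3_eq_cube field_simps)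
  with assms show ?thesis
    using power_mono_iff[of x "c * b * (a / b) powr (1/3)" 3] by simp
qed

theorem corollary1:
  shows "\<exists>C::real. C > 0 \<and> (\<forall>(n::nat) (E::nat \<Rightarrow> nat \<Rightarrow> bool).
     simple_graph n E \<and> (\<exists>i j. E i j) \<longrightarrow>
     real (grundy_number n E) \<le> C * lambda1 n E * (real n / lambda1 n E) powr (1/3))"
proof (intro exI[of _ 5] conjI allI impI)
  fix n E
  assume "simple_graph n E \<and> (\<exists>i j. E i j)"
  then obtain i j where G: "simple_graph n E" and "E i j"
    by blast
  then have "i < n"
    by (simp add: simple_graph_def)
  then have "0 < n"
    by simp
  obtain xs where xs: "distinct xs" "set xs = {0..<n}"
    and grundy: "grundy_number n E = ff_num_colors E xs"
    using grundy_number_attained .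
  have "grundy_colouring n E (first_fit E xs)"
    using first_fit_grundy_colouring[OF G xs] .
  note bounds = grundy_colouring_cube_bound[OF this G \<open>E i j\<close>
      quad_form_adjacency_le_lambda1[OF simple_graph_symp[OF G]]]
  have "real (grundy_number n E) ^ 3 \<le> 108 * real n * (lambda1 n E)\<^sup>2"
    using bounds(2) by (simp add: grundy ff_num_colors_def xs(2))
  also have "\<dots> \<le> 5 ^ 3 * real n * (lambda1 n E)\<^sup>2"
    by (intro mult_right_mono) auto
  finally have "real (grundy_number n E) ^ 3 \<le> 5 ^ 3 * real n * (lambda1 n E)\<^sup>2" .
  then show "real (grundy_number n E) \<le> 5 * lambda1 n E * (real n / lambda1 n E) powr (1/3)"
    using bounds(1) \<open>0 < n\<close> by (intro le_powr_third_if_cube_le) auto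
qed simp

end
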